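(* Fix $w\in(0,1]$, $b>0$ and $c\in\mathbb{R}$, and let $\delta(x;w,b,c)$ be the posterior median for the normal slab. Then $$\delta(x;w,b,c)-\frac{x/b^2+c}{1/b^2+1}\to0\quad\text{as }|x|\to+\infty.$$
   Context: Consider the model $X\mid\mu\sim N(\mu,1)$ with prior $\mu\sim(1-w)\delta_0+w\,\gamma(\cdot;b,c)$, where $\delta_0$ is the point mass at $0$, $w\in[0,1]$, and $\gamma(\mu;b,c)=\frac{b}{\sqrt{2\pi}}\exp\{-b^2(\mu-c)^2/2\}$ (the $N(c,1/b^2)$ density) with $b>0$, $c\in\mathbb{R}$. $\delta(x;w,b,c)$ denotes the median of the posterior distribution of $\mu$ given $X=x$. *)

theory Defs
  imports "HOL-Analysis.Analysis"
begin

definition std_phi :: "real \<Rightarrow> real" where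
  "std_phi y = exp (- (y^2) / 2) / sqrt (2 * pi)"

definition slab_gamma :: "real \<Rightarrow> real \<Rightarrow> real \<Rightarrow> real" where
  "slab_gamma b c mu = b / sqrt (2 * pi) * exp (- (b^2) * (mu - c)^2 / 2)"

text \<open>Posterior distribution function P(mu \<le> t | X = x) under the prior
  (1 - w) delta_0 + w gamma(.; b, c), obtained by Bayes' rule.\<close>
definition post_cdf :: "real \<Rightarrow> real \<Rightarrow> real \<Rightarrow> real \<Rightarrow> real \<Rightarrow> real" where
  "post_cdf w b c x t =
     ((1 - w) * std_phi x * (if 0 \<le> t then 1 else 0)
        + w * (LINT mu|lborel. indicator {..t} mu * std_phi (x - mu) * slab_gamma b c mu))
     / ((1 - w) * std_phi x + w * (LINT mu|lborel. std_phi (x - mu) * slab_gamma b c mu))"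

definition post_median :: "real \<Rightarrow> real \<Rightarrow> real \<Rightarrow> real \<Rightarrow> real" where
  "post_median x w b c = Inf {t. post_cdf w b c x t \<ge> 1/2}"

end

theory Submission
  imports Defs "HOL-Probability.Distributions" "HOL-Real_Asymp.Real_Asymp"
begin

text \<open>The slab is conjugate to the normal likelihood: on the slab component the posterior of \<open>\<mu>\<close>
  is normal with mean \<open>(x/b\<^sup>2 + c)/(1/b\<^sup>2 + 1)\<close> and a standard deviation not depending on \<open>x\<close>,
  and the slab marginal of \<open>X\<close> is normal with variance \<open>1 + 1/b\<^sup>2 > 1\<close>. Hence the spike's share
  of the posterior, proportional to the ratio of the standard normal density to this wider
  normal density, tends to \<open>0\<close> as \<open>|x| \<rightarrow> \<infinity>\<close>. Once it is small enough, the posterior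
  distribution function crosses \<open>1/2\<close> within \<open>\<epsilon>\<close> of the median of the normal slab
  posterior, which is its mean.\<close>

definition normal_cdf :: "real \<Rightarrow> real \<Rightarrow> real" where
  "normal_cdf \<sigma> u = (LINT y|lborel. indicator {..u} y * normal_density 0 \<sigma> y)"

definition slab_post_mean :: "real \<Rightarrow> real \<Rightarrow> real \<Rightarrow> real" where
  "slab_post_mean b c x = (x / b\<^sup>2 + c) / (1 / b\<^sup>2 + 1)"

definition slab_post_sd :: "real \<Rightarrow> real" where
  "slab_post_sd b = 1 / sqrt (1 + b\<^sup>2)"

definition slab_marginal_sd :: "real \<Rightarrow> real" where
  "slab_marginal_sd b = sqrt (1 + 1 / b\<^sup>2)"

lemma slab_post_sd_pos: "0 < slab_post_sd b"
  unfolding slab_post_sd_def by (simp add: add_pos_nonneg)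

lemma slab_marginal_sd_gt_1: "0 < b \<Longrightarrow> 1 < slab_marginal_sd b"
  unfolding slab_marginal_sd_def by simp

lemma integrable_indicator_normal_density:
  "0 < \<sigma> \<Longrightarrow> A \<in> sets borel \<Longrightarrow> integrable lborel (\<lambda>y. indicator A y * normal_density \<mu> \<sigma> y)"
  using integrable_mult_indicator[OF _ integrable_normal_density] by simp

lemma lint_indicator_atMost_normal_density:
  "(LINT y|lborel. indicator {..t} y * normal_density \<mu> \<sigma> y) = normal_cdf \<sigma> (t - \<mu>)"
proof -
  have "(LINT y|lborel. indicator {..t} y * normal_density \<mu> \<sigma> y)
      = (LINT y|lborel. indicator {..t} (\<mu> + 1 * y) * normal_density \<mu> \<sigma> (\<mu> + 1 * y))"
    using lborel_integral_real_affine[of 1 _ \<mu>] by simp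
  also have "\<dots> = normal_cdf \<sigma> (t - \<mu>)"
    unfolding normal_cdf_def
    by (rule arg_cong[where f = "integral\<^sup>L lborel"]) (auto simp: indicator_def normal_density_def)
  finally show ?thesis .
qed

lemma normal_cdf_mono: "0 < \<sigma> \<Longrightarrow> u \<le> v \<Longrightarrow> normal_cdf \<sigma> u \<le> normal_cdf \<sigma> v"
  unfolding normal_cdf_def
  by (rule integral_mono[OF integrable_indicator_normal_density integrable_indicator_normal_density])
     (auto simp: indicator_def)

lemma normal_cdf_minus:
  assumes "0 < \<sigma>"
  shows "normal_cdf \<sigma> (- u) = 1 - normal_cdf \<sigma> u"
proof -
  let ?f = "normal_density 0 \<sigma>"
  have "1 = (LINT y|lborel. ?f y)"
    using assms by simp
  also have "\<dots> = (LINT y|lborel. indicator {..u} y * ?f y + indicator {u<..} y * ?f y)"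
    by (rule arg_cong[where f = "integral\<^sup>L lborel"]) (auto simp: indicator_def)
  also have "\<dots> = normal_cdf \<sigma> u + (LINT y|lborel. indicator {u<..} y * ?f y)"
    unfolding normal_cdf_def using assms by (simp add: integrable_indicator_normal_density)
  also have "(LINT y|lborel. indicator {u<..} y * ?f y)
      = (LINT y|lborel. indicator {u<..} (0 + -1 * y) * ?f (0 + -1 * y))"
    using lborel_integral_real_affine[of "-1" _ 0] by simp
  also have "\<dots> = (LINT y|lborel. indicator {..<-u} y * ?f y)"
    by (rule arg_cong[where f = "integral\<^sup>L lborel"]) (auto simp: indicator_def normal_density_def)
  also have "\<dots> = normal_cdf \<sigma> (- u)"
    unfolding normal_cdf_def
    by (rule integral_cong_AE) (auto intro: AE_mp[OF AE_lborel_singleton[of "- u"]] simp: indicator_def)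
  finally show ?thesis by simp
qed

lemma normal_cdf_gt_half:
  assumes "0 < \<sigma>" and "0 < u"
  shows "1 / 2 < normal_cdf \<sigma> u"
proof -
  let ?f = "normal_density 0 \<sigma>"
  have "normal_cdf \<sigma> u = (LINT y|lborel. indicator {..0} y * ?f y + indicator {0<..u} y * ?f y)"
    unfolding normal_cdf_def using assms(2)
    by (intro arg_cong[where f = "integral\<^sup>L lborel"]) (auto simp: indicator_def)
  also have "\<dots> = normal_cdf \<sigma> 0 + (LINT y|lborel. indicator {0<..u} y * ?f y)"
    unfolding normal_cdf_def using assms(1) by (simp add: integrable_indicator_normal_density)
  finally have split: "normal_cdf \<sigma> u = 1 / 2 + (LINT y|lborel. indicator {0<..u} y * ?f y)"
    using normal_cdf_minus[OF assms(1), of 0] by simp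
  have "(LINT y|lborel. indicator {0<..u} y * ?f u) \<le> (LINT y|lborel. indicator {0<..u} y * ?f y)"
  proof (rule integral_mono)
    show "integrable lborel (\<lambda>y. indicator {0<..u} y * ?f u)"
      using assms(2) by (intro integrable_mult_left integrable_real_indicator) auto
    show "integrable lborel (\<lambda>y. indicator {0<..u} y * ?f y)"
      using assms(1) by (simp add: integrable_indicator_normal_density)
    fix y
    show "indicator {0<..u} y * ?f u \<le> indicator {0<..u} y * ?f y"
    proof (cases "y \<in> {0<..u}")
      case True
      then have "y\<^sup>2 \<le> u\<^sup>2"
        by (intro power_mono) auto
      then have "exp (- (u - 0)\<^sup>2 / (2 * \<sigma>\<^sup>2)) \<le> exp (- (y - 0)\<^sup>2 / (2 * \<sigma>\<^sup>2))"
        by (simp add: divide_right_mono)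
      then show ?thesis
        using True unfolding normal_density_def by (simp add: divide_right_mono)
    qed simp
  qed
  moreover have "(LINT y|lborel. indicator {0<..u} y * ?f u) = u * ?f u"
    using assms(2) by simp
  moreover have "0 < u * ?f u"
    using assms normal_density_pos by simp
  ultimately show ?thesis
    using split by linarith
qed

lemma normal_cdf_minus_lt_half: "0 < \<sigma> \<Longrightarrow> 0 < u \<Longrightarrow> normal_cdf \<sigma> (- u) < 1 / 2"
  using normal_cdf_minus normal_cdf_gt_half by fastforce

lemma normal_conjugate_exponent:
  fixes v :: real
  assumes "0 < v"
  shows "- (x - \<mu>)\<^sup>2 / (2 * 1\<^sup>2) + - (\<mu> - c)\<^sup>2 / (2 * v)
    = - (x - c)\<^sup>2 / (2 * (1 + v)) + - (\<mu> - (x * v + c) / (v + 1))\<^sup>2 / (2 * (v / (1 + v)))"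
proof -
  have v: "0 < 1 + v"
    using assms by simp
  have poly: "(1 + v) * ((x - \<mu>)\<^sup>2 * v + (\<mu> - c)\<^sup>2) = (x - c)\<^sup>2 * v + ((1 + v) * \<mu> - x * v - c)\<^sup>2"
    by algebra
  have mean: "\<mu> - (x * v + c) / (v + 1) = ((1 + v) * \<mu> - x * v - c) / (1 + v)"
    using v by (simp add: field_simps)
  have "- (x - \<mu>)\<^sup>2 / (2 * 1\<^sup>2) + - (\<mu> - c)\<^sup>2 / (2 * v)
      = - ((1 + v) * ((x - \<mu>)\<^sup>2 * v + (\<mu> - c)\<^sup>2)) / (2 * v * (1 + v))"
    using assms v by (simp add: divide_simps)
  also have "\<dots> = - (x - c)\<^sup>2 / (2 * (1 + v)) + - (((1 + v) * \<mu> - x * v - c) / (1 + v))\<^sup>2 / (2 * (v / (1 + v)))"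
    unfolding poly using assms v by (simp add: divide_simps) (simp add: algebra_simps power2_eq_square)
  finally show ?thesis
    unfolding mean .
qed

lemma normal_density_conjugate:
  fixes \<sigma> :: real
  assumes "0 < \<sigma>"
  shows "normal_density \<mu> 1 x * normal_density c \<sigma> \<mu> =
    normal_density c (sqrt (1 + \<sigma>\<^sup>2)) x * normal_density ((x * \<sigma>\<^sup>2 + c) / (\<sigma>\<^sup>2 + 1)) (\<sigma> / sqrt (1 + \<sigma>\<^sup>2)) \<mu>"
    (is "_ = ?rhs")
proof -
  define v where "v = \<sigma>\<^sup>2"
  have v: "0 < v"
    using assms by (simp add: v_def)
  have sq1: "(sqrt (1 + v))\<^sup>2 = 1 + v" and sq2: "(\<sigma> / sqrt (1 + v))\<^sup>2 = v / (1 + v)"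
    by (simp_all add: v_def power_divide)
  have const: "1 / sqrt (2 * pi * 1\<^sup>2) * (1 / sqrt (2 * pi * v))
      = 1 / sqrt (2 * pi * (1 + v)) * (1 / sqrt (2 * pi * (v / (1 + v))))"
    using v by (simp add: real_sqrt_mult real_sqrt_divide add_pos_nonneg)
  have "normal_density \<mu> 1 x * normal_density c \<sigma> \<mu>
      = 1 / sqrt (2 * pi * 1\<^sup>2) * (1 / sqrt (2 * pi * v))
        * exp (- (x - \<mu>)\<^sup>2 / (2 * 1\<^sup>2) + - (\<mu> - c)\<^sup>2 / (2 * v))"
    unfolding normal_density_def v_def exp_add by simp
  also have "\<dots> = 1 / sqrt (2 * pi * (1 + v)) * (1 / sqrt (2 * pi * (v / (1 + v))))
        * exp (- (x - c)\<^sup>2 / (2 * (1 + v)) + - (\<mu> - (x * v + c) / (v + 1))\<^sup>2 / (2 * (v / (1 + v))))"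
    unfolding const normal_conjugate_exponent[OF v] ..
  also have "\<dots> = ?rhs"
    unfolding normal_density_def v_def[symmetric] sq1 sq2 exp_add by simp
  finally show ?thesis .
qed

lemma std_phi_eq_normal_density: "std_phi (x - \<mu>) = normal_density \<mu> 1 x"
  unfolding std_phi_def normal_density_def by (simp add: power2_commute)

lemma slab_gamma_eq_normal_density: "0 < b \<Longrightarrow> slab_gamma b c \<mu> = normal_density c (1 / b) \<mu>"
  unfolding slab_gamma_def normal_density_def by (simp add: real_sqrt_divide field_simps)

lemma std_phi_mult_slab_gamma:
  assumes "0 < b"
  shows "std_phi (x - \<mu>) * slab_gamma b c \<mu>
    = normal_density c (slab_marginal_sd b) x * normal_density (slab_post_mean b c x) (slab_post_sd b) \<mu>"
proof -
  have "(1 / b) / sqrt (1 + (1 / b)\<^sup>2) = 1 / sqrt (1 + b\<^sup>2)"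
    using assms by (simp add: real_sqrt_divide field_simps)
  then show ?thesis
    using normal_density_conjugate[of "1 / b" \<mu> x c] assms
    by (simp add: std_phi_eq_normal_density slab_gamma_eq_normal_density slab_marginal_sd_def
        slab_post_mean_def slab_post_sd_def power_divide)
qed

lemma post_cdf_eq:
  assumes "0 < b"
  shows "post_cdf w b c x t =
    ((1 - w) * std_phi x * (if 0 \<le> t then 1 else 0)
      + w * normal_density c (slab_marginal_sd b) x * normal_cdf (slab_post_sd b) (t - slab_post_mean b c x))
    / ((1 - w) * std_phi x + w * normal_density c (slab_marginal_sd b) x)"
proof -
  have "(LINT \<mu>|lborel. indicator {..t} \<mu> * std_phi (x - \<mu>) * slab_gamma b c \<mu>)
      = (LINT \<mu>|lborel. normal_density c (slab_marginal_sd b) x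
           * (indicator {..t} \<mu> * normal_density (slab_post_mean b c x) (slab_post_sd b) \<mu>))"
    by (simp add: mult.assoc std_phi_mult_slab_gamma[OF assms] mult.left_commute)
  also have "\<dots> = normal_density c (slab_marginal_sd b) x * normal_cdf (slab_post_sd b) (t - slab_post_mean b c x)"
    by (simp add: lint_indicator_atMost_normal_density)
  finally have "(LINT \<mu>|lborel. indicator {..t} \<mu> * std_phi (x - \<mu>) * slab_gamma b c \<mu>)
      = normal_density c (slab_marginal_sd b) x * normal_cdf (slab_post_sd b) (t - slab_post_mean b c x)" .
  moreover have "(LINT \<mu>|lborel. std_phi (x - \<mu>) * slab_gamma b c \<mu>) = normal_density c (slab_marginal_sd b) x"
    by (simp add: std_phi_mult_slab_gamma[OF assms] slab_post_sd_pos)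
  ultimately show ?thesis
    unfolding post_cdf_def by (simp add: mult.assoc)
qed

lemma tendsto_exp_neg_quadratic: "0 < k \<Longrightarrow> ((\<lambda>x::real. exp (p * x + q - k * x\<^sup>2)) \<longlongrightarrow> 0) at_infinity"
  unfolding at_infinity_eq_at_top_bot by (intro filterlim_sup; real_asymp)

lemma normal_density_ratio_tendsto_0:
  assumes "0 < \<sigma>" and "\<sigma> < \<tau>"
  shows "((\<lambda>x. normal_density \<mu> \<sigma> x / normal_density \<nu> \<tau> x) \<longlongrightarrow> 0) at_infinity"
proof -
  define k where "k = 1 / (2 * \<sigma>\<^sup>2) - 1 / (2 * \<tau>\<^sup>2)"
  define p where "p = \<mu> / \<sigma>\<^sup>2 - \<nu> / \<tau>\<^sup>2"
  define q where "q = \<nu>\<^sup>2 / (2 * \<tau>\<^sup>2) - \<mu>\<^sup>2 / (2 * \<sigma>\<^sup>2)"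
  have "\<sigma>\<^sup>2 < \<tau>\<^sup>2"
    using assms by (simp add: power_strict_mono)
  then have k: "0 < k"
    unfolding k_def using assms by (simp add: frac_less2)
  have "normal_density \<mu> \<sigma> x / normal_density \<nu> \<tau> x = \<tau> / \<sigma> * exp (p * x + q - k * x\<^sup>2)" for x
  proof -
    have "normal_density \<mu> \<sigma> x / normal_density \<nu> \<tau> x
        = sqrt (2 * pi * \<tau>\<^sup>2) / sqrt (2 * pi * \<sigma>\<^sup>2)
          * exp (- (x - \<mu>)\<^sup>2 / (2 * \<sigma>\<^sup>2) - - (x - \<nu>)\<^sup>2 / (2 * \<tau>\<^sup>2))"
      unfolding normal_density_def exp_diff using assms by (simp add: field_simps)
    also have "- (x - \<mu>)\<^sup>2 / (2 * \<sigma>\<^sup>2) - - (x - \<nu>)\<^sup>2 / (2 * \<tau>\<^sup>2) = p * x + q - k * x\<^sup>2"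
      unfolding p_def q_def k_def using assms by (simp add: power2_diff field_simps) algebra
    also have "sqrt (2 * pi * \<tau>\<^sup>2) / sqrt (2 * pi * \<sigma>\<^sup>2) = \<tau> / \<sigma>"
      using assms by (simp add: real_sqrt_mult)
    finally show ?thesis .
  qed
  then show ?thesis
    using tendsto_mult_right_zero[OF tendsto_exp_neg_quadratic[OF k, of p q], where c = "\<tau> / \<sigma>"] by simp
qed

lemma post_median_near_slab_post_mean:
  assumes "0 < w" "w \<le> 1" "0 < b" "0 < \<epsilon>"
    and spike_small: "(1 - w) * std_phi x
      < min (2 * normal_cdf (slab_post_sd b) \<epsilon> - 1) (1 - 2 * normal_cdf (slab_post_sd b) (- \<epsilon>))
        * (w * normal_density c (slab_marginal_sd b) x)"
  shows "\<bar>post_median x w b c - slab_post_mean b c x\<bar> \<le> \<epsilon>"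
proof -
  define A where "A = (1 - w) * std_phi x"
  define B where "B = w * normal_density c (slab_marginal_sd b) x"
  define F where "F = normal_cdf (slab_post_sd b)"
  define m where "m = slab_post_mean b c x"
  define S where "S = {t. 1 / 2 \<le> post_cdf w b c x t}"
  have A: "0 \<le> A"
    unfolding A_def std_phi_def using assms(2) by simp
  have B: "0 < B"
    unfolding B_def using assms(1) slab_marginal_sd_gt_1[OF assms(3)] by (simp add: normal_density_pos)
  have "A < min (2 * F \<epsilon> - 1) (1 - 2 * F (- \<epsilon>)) * B"
    using spike_small unfolding A_def B_def F_def .
  then have upper: "A < (2 * F \<epsilon> - 1) * B" and lower: "A < (1 - 2 * F (- \<epsilon>)) * B"
    using B by (meson less_le_trans less_imp_le min.cobounded1 min.cobounded2 mult_right_mono)+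
  have cdf: "post_cdf w b c x t = (A * (if 0 \<le> t then 1 else 0) + B * F (t - m)) / (A + B)" for t
    unfolding post_cdf_eq[OF assms(3)] A_def B_def F_def m_def by (simp add: mult.assoc)
  have in_S: "m + \<epsilon> \<in> S"
  proof -
    have "A + B < 2 * (B * F \<epsilon>)"
      using upper by (simp add: algebra_simps)
    then show ?thesis
      unfolding S_def cdf using A B by (simp add: field_simps)
  qed
  have S_lower: "m - \<epsilon> \<le> t" if "t \<in> S" for t
  proof (rule ccontr)
    assume "\<not> m - \<epsilon> \<le> t"
    then have "F (t - m) \<le> F (- \<epsilon>)"
      unfolding F_def by (intro normal_cdf_mono slab_post_sd_pos) simp
    then have "B * F (t - m) \<le> B * F (- \<epsilon>)"
      using B by (simp add: mult_left_mono)
    moreover have "2 * A + 2 * (B * F (- \<epsilon>)) < A + B"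
      using lower by (simp add: algebra_simps)
    ultimately have "2 * (A * (if 0 \<le> t then 1 else 0) + B * F (t - m)) < A + B"
      using A by (cases "0 \<le> t") simp_all
    then show False
      using that A B unfolding S_def cdf by (simp add: field_simps)
  qed
  have "Inf S \<le> m + \<epsilon>"
    using in_S S_lower by (metis cInf_lower bdd_belowI)
  moreover have "m - \<epsilon> \<le> Inf S"
    using in_S S_lower by (metis cInf_greatest empty_iff)
  ultimately show ?thesis
    unfolding post_median_def S_def m_def by simp
qed

lemma spike_negligible_at_infinity:
  assumes "0 < w" and "0 < b" and "0 < \<alpha>"
  shows "\<forall>\<^sub>F x in at_infinity. (1 - w) * std_phi x < \<alpha> * (w * normal_density c (slab_marginal_sd b) x)"
proof -
  define g where "g x = w * normal_density c (slab_marginal_sd b) x" for x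
  have g_pos: "0 < g x" for x
    unfolding g_def using assms(1) slab_marginal_sd_gt_1[OF assms(2)] by (simp add: normal_density_pos)
  have spike_ratio: "(\<lambda>x. (1 - w) * std_phi x / (\<alpha> * g x))
      = (\<lambda>x. (1 - w) / (\<alpha> * w) * (normal_density 0 1 x / normal_density c (slab_marginal_sd b) x))"
    using std_phi_eq_normal_density[of _ 0] unfolding g_def
    by (intro ext) (simp only: diff_zero times_divide_times_eq mult.assoc)
  have "((\<lambda>x. (1 - w) * std_phi x / (\<alpha> * g x)) \<longlongrightarrow> 0) at_infinity"
    unfolding spike_ratio
    by (intro tendsto_mult_right_zero normal_density_ratio_tendsto_0 slab_marginal_sd_gt_1 assms) simp
  then have "\<forall>\<^sub>F x in at_infinity. (1 - w) * std_phi x / (\<alpha> * g x) < 1"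
    by (rule order_tendstoD) simp
  then show ?thesis
    using assms(3) g_pos by (simp add: g_def divide_less_eq)
qed

theorem mainTheorem4:
  fixes w b c :: real
  assumes "0 < w" and "w \<le> 1" and "0 < b"
  shows "((\<lambda>x. post_median x w b c - (x / b^2 + c) / (1 / b^2 + 1)) \<longlongrightarrow> 0) at_infinity"
proof (rule tendstoI)
  fix e :: real
  assume "0 < e"
  define \<alpha> where "\<alpha> = min (2 * normal_cdf (slab_post_sd b) (e / 2) - 1)
    (1 - 2 * normal_cdf (slab_post_sd b) (- (e / 2)))"
  have "0 < \<alpha>"
    using normal_cdf_gt_half[OF slab_post_sd_pos, of "e / 2" b]
      normal_cdf_minus_lt_half[OF slab_post_sd_pos, of "e / 2" b] \<open>0 < e\<close>
    by (simp add: \<alpha>_def)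
  then have "\<forall>\<^sub>F x in at_infinity.
      (1 - w) * std_phi x < \<alpha> * (w * normal_density c (slab_marginal_sd b) x)"
    by (rule spike_negligible_at_infinity[OF assms(1,3)])
  then show "\<forall>\<^sub>F x in at_infinity. dist (post_median x w b c - (x / b^2 + c) / (1 / b^2 + 1)) 0 < e"
  proof eventually_elim
    case (elim x)
    then have "\<bar>post_median x w b c - slab_post_mean b c x\<bar> \<le> e / 2"
      using \<open>0 < e\<close> by (intro post_median_near_slab_post_mean assms) (simp_all add: \<alpha>_def)
    then show ?case
      using \<open>0 < e\<close> by (simp add: dist_real_def slab_post_mean_def)
  qed
qed

end
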